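(* Assume (A1)–(A8) and let $(x_i^k)$, $(y_i^k)$, $(\rho_i^k)$ ($i=1,\dots,n$) be generated by Algorithm PS. Then for each $i=1,\dots,n$: (a) $(\rho_i^k)_k$ is bounded; (b) $(x_i^k)_k$ is bounded; (c) there exist constants $\rho_{\min},\rho_{\max}$ (independent of $i$ and $k$) with $0<\rho_{\min}\le\rho_i^k\le\rho_{\max}<\infty$ for all $k\ge0$ and all $i$; (d) $(y_i^k)_k$ is bounded.
   Context: Standing setting. Let $\mathcal H_0,\dots,\mathcal H_{n-1}$ be real Hilbert spaces ($n\ge2$) and $\mathcal H_n:=\mathcal H_0$. Conventions: $0\cdot\infty=0$, $r\cdot\infty=\infty$ for $r>0$, $1/\infty=0$, $1/0=\infty$. For each $i=1,\dots,n$: (A1) $G_i:\mathcal H_0\to\mathcal H_i$ is bounded linear and $G_n=I$; (A2) $A_i:\mathcal H_i\rightrightarrows\mathcal H_i$ is maximal monotone; (A3) $B_i:\mathcal H_i\to\mathcal H_i$ is monotone and $\ell_i$-Lipschitz, $\ell_i\in[0,\infty)$; (A4) $C_i:\mathcal H_i\to\mathcal H_i$ is $\beta_i$-cocoercive with $\beta_i\in(0,\infty]$, i.e. $\langle x-y,C_ix-C_iy\rangle\ge\beta_i\|C_ix-C_iy\|^2$ for all $x,y$ (so $\beta_i=\infty$ means $C_i$ is constant, and then $1/(4\beta_i)=0$); (A5) $D_i:\mathcal H_i\to\mathcal H_i$ is monotone and continuously differentiable with $\|D_i'(x)-D_i'(y)\|\le m_i\|x-y\|$ for all $x,y$, $m_i\in[0,\infty)$;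 (A6) with $T_i:=A_i+B_i+C_i+D_i$, the inclusion $0\in\sum_{i=1}^nG_i^*T_i(G_iz)$ has at least one solution $z\in\mathcal H_0$; (A7) there is $\mathcal I_D\subset\{1,\dots,n\}$ with $m_i>0$ for $i\in\mathcal I_D$ and $m_i=0$, $D_i=0$ for $i\notin\mathcal I_D$. Notation: $D_{i,(u)}(x):=D_i(u)+D_i'(u)(x-u)$; for a maximal monotone $S$, $J_S:=(S+I)^{-1}$. $\boldsymbol{\mathcal H}:=\mathcal H_0\times\mathcal H_1\times\cdots\times\mathcal H_{n-1}$ with inner product $\langle p,\tilde p\rangle_\gamma:=\gamma\langle z,\tilde z\rangle+\sum_{i=1}^{n-1}\langle w_i,\tilde w_i\rangle$ for $p=(z,w_1,\dots,w_{n-1})$, $\tilde p=(\tilde z,\tilde w_1,\dots,\tilde w_{n-1})$, and norm $\|\cdot\|_\gamma$; for such $p$ one writes $w_n:=-\sum_{i=1}^{n-1}G_i^*w_i$. The extended solution set is $\mathcal S:=\{p\in\boldsymbol{\mathcal H}: w_i\in T_i(G_iz),\ i=1,\dots,n\}$ (with $w_n$ as just defined). Algorithm PS. Input: $(z^0,w_1^0,\dots,w_{n-1}^0)\in\boldsymbol{\mathcal H}$, $0<\underline\tau<\overline\tau<2$, $0<\underline\theta<\overline\theta<2$, $\hat\rho>0$, $\hat\delta>0$, $\gamma>0$; $w_n^0:=-\sum_{i=1}^{n-1}G_i^*w_i^0$. For $k=0,1,2,\dots$: for each $i=1,\dots,n$ define $(\rho_i^k,x_i^k,y_i^k)$ as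 follows. (i) If $w_i^k\in T_i(G_iz^k)$: $\rho_i^k=\hat\rho$, $x_i^k=G_iz^k$, $y_i^k=w_i^k$. (ii) Otherwise, if $i\in\mathcal I_D$: $\rho_i^k>0$ and $x_i^k=J_{\rho_i^k(A_i+D_{i,(G_iz^k)})}\big(G_iz^k+\rho_i^kw_i^k-\rho_i^k(B_i+C_i)(G_iz^k)\big)$ satisfy $\underline\theta\le4\ell_i^2(\rho_i^k)^2+(\beta_i^{-1}+\hat\delta)\rho_i^k+(m_i\rho_i^k\|x_i^k-G_iz^k\|)^2\le\overline\theta$, and $y_i^k=\frac{G_iz^k-x_i^k}{\rho_i^k}+w_i^k+[B_i(x_i^k)-B_i(G_iz^k)]+[D_i(x_i^k)-D_{i,(G_iz^k)}(x_i^k)]$. (iii) Otherwise ($i\notin\mathcal I_D$): some $\rho_i^k>0$ is chosen, $x_i^k=J_{\rho_i^kA_i}\big(G_iz^k+\rho_i^kw_i^k-\rho_i^k(B_i+C_i)(G_iz^k)\big)$ and $y_i^k=\frac{G_iz^k-x_i^k}{\rho_i^k}+w_i^k+[B_i(x_i^k)-B_i(G_iz^k)]$. Then set $u_i^k=x_i^k-G_ix_n^k$ ($i=1,\dots,n-1$), $v^k=\sum_{i=1}^nG_i^*y_i^k$, $\varphi_k=\langle z^k,v^k\rangle+\sum_{i=1}^{n-1}\langle w_i^k,u_i^k\rangle-\sum_{i=1}^n\big[\langle x_i^k,y_i^k\rangle+\frac1{4\beta_i}\|x_i^k-G_iz^k\|^2\big]$, $\pi_k=\gamma^{-1}\|v^k\|^2+\sum_{i=1}^{n-1}\|u_i^k\|^2$.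 If $\varphi_k>0$: choose $\tau_k\in[\underline\tau,\overline\tau]$, $\alpha_k=\tau_k\varphi_k/\pi_k$, $z^{k+1}=z^k-\gamma^{-1}\alpha_kv^k$, $w_i^{k+1}=w_i^k-\alpha_ku_i^k$ ($i=1,\dots,n-1$); otherwise $z^{k+1}=z^k$, $w_i^{k+1}=w_i^k$. Finally $w_n^{k+1}=-\sum_{i=1}^{n-1}G_i^*w_i^{k+1}$. (A8): for each $i\in\{1,\dots,n\}\setminus\mathcal I_D$ there are constants $\underline\rho_i,\overline\rho_i$ with $0<\underline\rho_i\le\rho_i^k\le\overline\rho_i<1/\big(\frac1{4\beta_i}+\ell_i\big)$ for all $k\ge0$ whenever $\rho_i^k$ is chosen in case (iii). *)

theory Defs
  imports "HOL-Analysis.Analysis" "HOL-Library.Extended_Real"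
begin

text \<open>All Hilbert spaces H_0,...,H_{n-1} are modelled as closed linear subspaces of one
ambient real Hilbert space of type 'a. Set-valued operators are functions 'a => 'a set.\<close>

definition closed_subspace :: "'a::real_inner set \<Rightarrow> bool" where
  "closed_subspace V \<longleftrightarrow> subspace V \<and> closed V"

definition bounded_linear_between :: "'a::real_inner set \<Rightarrow> 'a set \<Rightarrow> ('a \<Rightarrow> 'a) \<Rightarrow> bool" where
  "bounded_linear_between V W G \<longleftrightarrow>
     (\<forall>x\<in>V. G x \<in> W) \<and>
     (\<forall>x\<in>V. \<forall>y\<in>V. G (x + y) = G x + G y) \<and>
     (\<forall>c. \<forall>x\<in>V. G (c *\<^sub>R x) = c *\<^sub>R G x) \<and>
     (\<exists>K. \<forall>x\<in>V. norm (G x) \<le> K * norm x)"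

definition monotone_op :: "'a::real_inner set \<Rightarrow> ('a \<Rightarrow> 'a set) \<Rightarrow> bool" where
  "monotone_op V A \<longleftrightarrow>
     (\<forall>x. A x \<subseteq> V) \<and> (\<forall>x. x \<notin> V \<longrightarrow> A x = {}) \<and>
     (\<forall>x y u v. u \<in> A x \<longrightarrow> v \<in> A y \<longrightarrow> 0 \<le> inner (x - y) (u - v))"

definition maximal_monotone_op :: "'a::real_inner set \<Rightarrow> ('a \<Rightarrow> 'a set) \<Rightarrow> bool" where
  "maximal_monotone_op V A \<longleftrightarrow> monotone_op V A \<and>
     (\<forall>x\<in>V. \<forall>u\<in>V. (\<forall>y v. v \<in> A y \<longrightarrow> 0 \<le> inner (x - y) (u - v)) \<longrightarrow> u \<in> A x)"

definition monotone_fun_on :: "'a::real_inner set \<Rightarrow> ('a \<Rightarrow> 'a) \<Rightarrow> bool" where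
  "monotone_fun_on V B \<longleftrightarrow> (\<forall>x\<in>V. \<forall>y\<in>V. 0 \<le> inner (x - y) (B x - B y))"

definition T_op :: "('a::real_vector \<Rightarrow> 'a set) \<Rightarrow> ('a \<Rightarrow> 'a) \<Rightarrow> ('a \<Rightarrow> 'a) \<Rightarrow> ('a \<Rightarrow> 'a) \<Rightarrow> 'a \<Rightarrow> 'a set" where
  "T_op A B C D x = {a + B x + C x + D x | a. a \<in> A x}"

definition D_lin :: "('a::real_vector \<Rightarrow> 'a) \<Rightarrow> ('a \<Rightarrow> 'a \<Rightarrow> 'a) \<Rightarrow> 'a \<Rightarrow> 'a \<Rightarrow> 'a" where
  "D_lin D D' u x = D u + D' u (x - u)"

text \<open>x = J_S(p) where J_S := (S + I)^{-1}, i.e. p is in (S + I)(x).\<close>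
definition resolvent_rel :: "('a::real_vector \<Rightarrow> 'a set) \<Rightarrow> 'a \<Rightarrow> 'a \<Rightarrow> bool" where
  "resolvent_rel S p x \<longleftrightarrow> p \<in> (\<lambda>s. s + x) ` S x"

end

theory Submission
  imports Defs
begin

text \<open>
  Fix a point \<open>p\<^sup>* = (\<zeta>, q\<^sub>1, \<dots>, q\<^sub>n\<^sub>-\<^sub>1)\<close> of the extended solution set. Monotonicity of
  \<open>A\<^sub>i\<close>, \<open>B\<^sub>i\<close>, \<open>D\<^sub>i\<close> and cocoercivity of \<open>C\<^sub>i\<close> make the affine function \<open>\<phi>\<^sub>k\<close> nonpositive at
  \<open>p\<^sup>*\<close>, so every update is a relaxed projection onto a halfspace containing \<open>p\<^sup>*\<close>: the distance
  \<open>\<parallel>p\<^sup>k - p\<^sup>*\<parallel>\<^sub>\<gamma>\<close> is nonincreasing and \<open>z\<^sup>k\<close>, \<open>w\<^sub>i\<^sup>k\<close> are bounded. The stepsizes are bounded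
  above by \<open>\<rho>hat\<close>, by \<open>\<theta>hi / \<delta>hat\<close> in case (ii) and by (A8) in case (iii). Comparing the
  resolvent step with a point \<open>a\<^sup>* \<in> A\<^sub>i(G\<^sub>i \<zeta>)\<close> then bounds \<open>x\<^sub>i\<^sup>k\<close>. Once \<open>x\<^sub>i\<^sup>k - G\<^sub>i z\<^sup>k\<close> is
  bounded, the right-hand side of the lower stepsize condition of case (ii) is \<open>O(\<rho>\<^sub>i\<^sup>k)\<close> for
  small stepsizes, which keeps \<open>\<rho>\<^sub>i\<^sup>k\<close> away from \<open>0\<close>; finally \<open>y\<^sub>i\<^sup>k\<close> is an explicit expression
  in \<open>1 / \<rho>\<^sub>i\<^sup>k\<close>, \<open>x\<^sub>i\<^sup>k\<close>, \<open>z\<^sup>k\<close> and \<open>w\<^sub>i\<^sup>k\<close>, hence bounded as well.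
\<close>

section \<open>Bounded sequences\<close>

lemma Bseq_norm_iff: "Bseq (\<lambda>k. norm (f k)) \<longleftrightarrow> Bseq f"
  by (simp add: Bseq_def)

lemma Bseq_plus:
  fixes f g :: "nat \<Rightarrow> 'a::real_normed_vector"
  assumes "Bseq f" "Bseq g"
  shows "Bseq (\<lambda>k. f k + g k)"
proof -
  obtain K L where "\<forall>k. norm (f k) \<le> K" "\<forall>k. norm (g k) \<le> L"
    using assms BseqE by metis
  then have "norm (f k + g k) \<le> K + L" for k
    by (meson add_mono norm_triangle_le)
  then show ?thesis by (rule BseqI')
qed

lemma Bseq_diff:
  fixes f g :: "nat \<Rightarrow> 'a::real_normed_vector"
  assumes "Bseq f" "Bseq g"
  shows "Bseq (\<lambda>k. f k - g k)"
  using Bseq_plus[OF assms(1), of "\<lambda>k. - g k"] assms(2) by (simp add: Bseq_minus_iff)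

lemma Bseq_scaleR_seq:
  fixes f :: "nat \<Rightarrow> 'a::real_normed_vector"
  assumes "Bseq r" "Bseq f"
  shows "Bseq (\<lambda>k. r k *\<^sub>R f k)"
proof -
  have "Bseq (\<lambda>k. r k * norm (f k))"
    using assms by (intro Bseq_mult) (simp_all add: Bseq_norm_iff)
  then show ?thesis by (simp add: Bseq_def abs_mult)
qed

lemma Bseq_norm_le:
  assumes le: "\<And>k. norm (f k) \<le> g k" and "Bseq g"
  shows "Bseq f"
proof -
  obtain K where K: "\<forall>k. norm (g k) \<le> K" using \<open>Bseq g\<close> BseqE by metis
  have "norm (f k) \<le> K" for k
    using le[of k] K[rule_format, of k] abs_ge_self[of "g k"] by simp
  then show ?thesis by (rule BseqI')
qed

lemma Bseq_sum:
  fixes f :: "'i \<Rightarrow> nat \<Rightarrow> 'a::real_normed_vector"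
  assumes "finite I" "\<And>i. i \<in> I \<Longrightarrow> Bseq (f i)"
  shows "Bseq (\<lambda>k. \<Sum>i\<in>I. f i k)"
  using assms
proof (induction I rule: finite_induct)
  case empty
  then show ?case by simp
next
  case (insert i I)
  then show ?case by (simp add: Bseq_plus)
qed

lemma Bseq_lipschitz_comp:
  fixes F :: "'a::real_normed_vector \<Rightarrow> 'b::real_normed_vector"
  assumes lip: "\<And>\<xi> \<eta>. \<xi> \<in> V \<Longrightarrow> \<eta> \<in> V \<Longrightarrow> norm (F \<xi> - F \<eta>) \<le> L * norm (\<xi> - \<eta>)"
    and "0 \<in> V" "\<And>k. s k \<in> V" "Bseq s"
  shows "Bseq (\<lambda>k. F (s k))"
proof (rule Bseq_norm_le)
  show "norm (F (s k)) \<le> norm (F 0) + L * norm (s k)" for k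
    using lip[OF assms(3)[of k] assms(2)] norm_triangle_sub[of "F (s k)" "F 0"] by simp
  show "Bseq (\<lambda>k. norm (F 0) + L * norm (s k))"
    using assms(4) by (intro Bseq_plus Bseq_mult Bfun_const) (simp add: Bseq_norm_iff)
qed

section \<open>Monotone maps with Lipschitz derivative\<close>

lemma has_derivative_along_line:
  fixes D :: "'a::real_normed_vector \<Rightarrow> 'b::real_normed_vector"
  assumes "subspace V" and deriv: "\<And>\<xi>. \<xi> \<in> V \<Longrightarrow> (D has_derivative D' \<xi>) (at \<xi> within V)"
    and "u \<in> V" "h \<in> V"
  shows "((\<lambda>t. D (u + t *\<^sub>R h)) has_derivative (\<lambda>s. D' (u + t *\<^sub>R h) (s *\<^sub>R h))) (at t)"
proof -
  have line: "((\<lambda>t. u + t *\<^sub>R h) has_derivative (\<lambda>s. s *\<^sub>R h)) (at t)"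
    by (auto intro!: derivative_eq_intros)
  have "range (\<lambda>t. u + t *\<^sub>R h) \<subseteq> V"
    using assms by (auto intro: subspace_add subspace_scale)
  from has_derivative_in_compose2[OF deriv this _ line] show ?thesis by simp
qed

lemma monotone_imp_derivative_nonneg:
  fixes D :: "'a::real_inner \<Rightarrow> 'a"
  assumes V: "subspace V" and deriv: "\<And>\<xi>. \<xi> \<in> V \<Longrightarrow> (D has_derivative D' \<xi>) (at \<xi> within V)"
    and mono: "monotone_fun_on V D" and "u \<in> V" "h \<in> V"
  shows "0 \<le> inner h (D' u h)"
proof (rule ccontr)
  assume neg: "\<not> 0 \<le> inner h (D' u h)"
  have "linear (D' u)"
    using has_derivative_linear[OF deriv[OF \<open>u \<in> V\<close>]] .
  then have "(\<lambda>s. inner h (D' u (s *\<^sub>R h))) = (\<lambda>s. inner h (D' u h) * s)"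
    by (auto simp: linear_scale mult.commute)
  moreover have "((\<lambda>t. inner h (D (u + t *\<^sub>R h))) has_derivative (\<lambda>s. inner h (D' u (s *\<^sub>R h)))) (at 0)"
    using has_derivative_inner_right[OF has_derivative_along_line[OF V deriv \<open>u \<in> V\<close> \<open>h \<in> V\<close>, of 0]]
    by simp
  ultimately have "DERIV (\<lambda>t. inner h (D (u + t *\<^sub>R h))) 0 :> inner h (D' u h)"
    by (simp add: has_field_derivative_def)
  from DERIV_neg_dec_right[OF this] neg obtain d where "d > 0"
    and dec: "\<And>e. e > 0 \<Longrightarrow> e < d \<Longrightarrow> inner h (D (u + e *\<^sub>R h)) < inner h (D u)"
    by auto
  have "u + (d/2) *\<^sub>R h \<in> V"
    using assms by (auto intro: subspace_add subspace_scale)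
  then have "0 \<le> inner ((u + (d/2) *\<^sub>R h) - u) (D (u + (d/2) *\<^sub>R h) - D u)"
    using mono \<open>u \<in> V\<close> unfolding monotone_fun_on_def by blast
  then have "0 \<le> (d/2) * inner h (D (u + (d/2) *\<^sub>R h) - D u)"
    by simp
  then have "inner h (D u) \<le> inner h (D (u + (d/2) *\<^sub>R h))"
    using \<open>d > 0\<close> by (simp add: inner_diff_right zero_le_mult_iff)
  with dec[of "d/2"] \<open>d > 0\<close> show False by simp
qed

lemma norm_diff_le_derivative_bound_along_segment:
  fixes D :: "'a::real_normed_vector \<Rightarrow> 'b::real_inner"
  assumes "subspace V" and "\<And>\<xi>. \<xi> \<in> V \<Longrightarrow> (D has_derivative D' \<xi>) (at \<xi> within V)"
    and "u \<in> V" "h \<in> V"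
    and bound: "\<And>t. 0 \<le> t \<Longrightarrow> t \<le> 1 \<Longrightarrow> norm (D' (u + t *\<^sub>R h) h) \<le> M"
  shows "norm (D (u + h) - D u) \<le> M"
proof -
  have deriv: "\<And>t. ((\<lambda>t. D (u + t *\<^sub>R h)) has_derivative (\<lambda>s. D' (u + t *\<^sub>R h) (s *\<^sub>R h))) (at t)"
    using has_derivative_along_line[OF assms(1-4)] by blast
  then have "continuous_on {0..1} (\<lambda>t. D (u + t *\<^sub>R h))"
    by (meson continuous_at_imp_continuous_on has_derivative_continuous)
  then obtain t where "t \<in> {0<..<1}"
    and "norm (D (u + 1 *\<^sub>R h) - D (u + 0 *\<^sub>R h)) \<le> norm (D' (u + t *\<^sub>R h) ((1 - 0) *\<^sub>R h))"
    using mvt_general[of 0 1 "\<lambda>t. D (u + t *\<^sub>R h)" "\<lambda>t s. D' (u + t *\<^sub>R h) (s *\<^sub>R h)"] deriv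
    by auto
  then show ?thesis using bound[of t] by simp
qed

lemma lipschitz_derivative_bounded_on_balls:
  fixes D :: "'a::real_normed_vector \<Rightarrow> 'b::real_inner"
  assumes V: "subspace V" and deriv: "\<And>\<xi>. \<xi> \<in> V \<Longrightarrow> (D has_derivative D' \<xi>) (at \<xi> within V)"
    and lip: "\<And>\<xi> \<eta> h. \<xi> \<in> V \<Longrightarrow> \<eta> \<in> V \<Longrightarrow> h \<in> V \<Longrightarrow>
                norm (D' \<xi> h - D' \<eta> h) \<le> m * norm (\<xi> - \<eta>) * norm h"
    and "0 \<le> m"
  obtains M where "\<And>\<xi>. \<xi> \<in> V \<Longrightarrow> norm \<xi> \<le> R \<Longrightarrow> norm (D \<xi>) \<le> M"
    and "\<And>\<xi> h. \<xi> \<in> V \<Longrightarrow> norm \<xi> \<le> R \<Longrightarrow> h \<in> V \<Longrightarrow> norm (D' \<xi> h) \<le> M * norm h"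
proof -
  have "0 \<in> V" using V by (rule subspace_0)
  obtain K where "K > 0" and K: "\<And>h. norm (D' 0 h) \<le> norm h * K"
    using has_derivative_bounded_linear[OF deriv[OF \<open>0 \<in> V\<close>]] bounded_linear.pos_bounded by blast
  define L where "L = K + m * R"
  have D'_bound: "norm (D' \<xi> h) \<le> L * norm h" if "\<xi> \<in> V" "norm \<xi> \<le> R" "h \<in> V" for \<xi> h
  proof -
    have "norm (D' \<xi> h) \<le> norm (D' 0 h) + m * norm \<xi> * norm h"
      using lip[OF that(1) \<open>0 \<in> V\<close> that(3)] norm_triangle_sub[of "D' \<xi> h" "D' 0 h"] by simp
    also have "\<dots> \<le> (K + m * R) * norm h"
      using K[of h] mult_right_mono[OF mult_left_mono[OF that(2) \<open>0 \<le> m\<close>] norm_ge_zero[of h]]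
      by (simp add: algebra_simps)
    finally show ?thesis unfolding L_def .
  qed
  have D_bound: "norm (D \<xi>) \<le> norm (D 0) + L * R" if "\<xi> \<in> V" "norm \<xi> \<le> R" for \<xi>
  proof -
    have "norm (D (0 + \<xi>) - D 0) \<le> L * R"
    proof (rule norm_diff_le_derivative_bound_along_segment[OF V deriv \<open>0 \<in> V\<close> that(1)])
      fix t :: real assume "0 \<le> t" "t \<le> 1"
      then have "norm (0 + t *\<^sub>R \<xi>) \<le> R"
        using that(2) mult_left_le_one_le[of "norm \<xi>" t] by simp
      moreover have "0 + t *\<^sub>R \<xi> \<in> V" using V that(1) by (simp add: subspace_scale)
      moreover have "0 \<le> L" using \<open>K > 0\<close> \<open>0 \<le> m\<close> that(2) norm_ge_zero[of \<xi>] unfolding L_def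
        by (smt (verit) mult_nonneg_nonneg)
      ultimately show "norm (D' (0 + t *\<^sub>R \<xi>) \<xi>) \<le> L * R"
        using D'_bound[OF _ _ that(1)] that(2) by (meson mult_left_mono order_trans)
    qed
    then show ?thesis using norm_triangle_sub[of "D \<xi>" "D 0"] by simp
  qed
  show ?thesis
  proof (rule that[of "max (norm (D 0) + L * R) L"])
    show "norm (D \<xi>) \<le> max (norm (D 0) + L * R) L" if "\<xi> \<in> V" "norm \<xi> \<le> R" for \<xi>
      using D_bound[OF that] by linarith
    show "norm (D' \<xi> h) \<le> max (norm (D 0) + L * R) L * norm h"
      if "\<xi> \<in> V" "norm \<xi> \<le> R" "h \<in> V" for \<xi> h
      using D'_bound[OF that] mult_right_mono[OF max.cobounded2[of L "norm (D 0) + L * R"] norm_ge_zero[of h]] by linarith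
  qed
qed

section \<open>Cocoercive operators and resolvent steps\<close>

lemma cocoercive_ereal_cases:
  fixes d \<Delta> :: "'a::real_inner"
  assumes "0 < \<beta>" and coco: "\<beta> * ereal ((norm \<Delta>)\<^sup>2) \<le> ereal (inner d \<Delta>)"
  obtains r where "\<beta> = ereal r" "0 < r" "r * (norm \<Delta>)\<^sup>2 \<le> inner d \<Delta>"
    | "\<beta> = \<infinity>" "\<Delta> = 0"
proof (cases \<beta>)
  case (real r)
  then show ?thesis using assms that(1) by simp
next
  case PInf
  have "\<Delta> = 0"
  proof (rule ccontr)
    assume "\<Delta> \<noteq> 0"
    then show False using coco PInf by simp
  qed
  then show ?thesis using PInf that(2) by simp
qed (use assms in simp)

lemma cocoercive_gap_nonneg:
  fixes d e \<Delta> :: "'a::real_inner"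
  assumes "0 < \<beta>" and "\<beta> * ereal ((norm \<Delta>)\<^sup>2) \<le> ereal (inner d \<Delta>)"
  shows "0 \<le> inner (e + d) \<Delta> + real_of_ereal (inverse (4 * \<beta>)) * (norm e)\<^sup>2"
  using assms
proof (cases rule: cocoercive_ereal_cases)
  case (1 r)
  have "- (norm e * norm \<Delta>) \<le> inner e \<Delta>"
    using Cauchy_Schwarz_ineq2[of e \<Delta>] by (simp add: abs_le_iff)
  moreover have "0 \<le> (2 * r * norm \<Delta> - norm e)\<^sup>2 / (4 * r)"
    using \<open>0 < r\<close> by simp
  moreover have "(2 * r * norm \<Delta> - norm e)\<^sup>2 / (4 * r) = r * (norm \<Delta>)\<^sup>2 - norm e * norm \<Delta> + (norm e)\<^sup>2 / (4 * r)"
    using \<open>0 < r\<close> by (simp add: field_simps power2_eq_square)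
  ultimately show ?thesis
    using 1 by (simp add: inner_add_left inverse_eq_divide)
qed simp

lemma cocoercive_lipschitz:
  fixes d \<Delta> :: "'a::real_inner"
  assumes "0 < \<beta>" and "\<beta> * ereal ((norm \<Delta>)\<^sup>2) \<le> ereal (inner d \<Delta>)"
  shows "norm \<Delta> \<le> real_of_ereal (inverse \<beta>) * norm d"
  using assms
proof (cases rule: cocoercive_ereal_cases)
  case (1 r)
  then have "norm \<Delta> * (r * norm \<Delta>) \<le> norm \<Delta> * norm d"
    using norm_cauchy_schwarz[of d \<Delta>] by (simp add: power2_eq_square ac_simps)
  then have "r * norm \<Delta> \<le> norm d"
    by (cases "\<Delta> = 0") simp_all
  then show ?thesis using 1 by (simp add: field_simps)
qed simp

lemma norm_le_of_inner_nonneg: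
  fixes x g p :: "'a::real_inner"
  assumes "0 \<le> inner (x - g) (p - x)"
  shows "norm (x - g) \<le> norm (p - g)"
proof -
  have "inner (x - g) (p - g) = inner (x - g) (p - x) + inner (x - g) (x - g)"
    by (simp add: inner_diff_right)
  then have "norm (x - g) * norm (x - g) \<le> norm (x - g) * norm (p - g)"
    using assms norm_cauchy_schwarz[of "x - g" "p - g"] by (simp add: norm_mult_ineq dot_square_norm power2_eq_square)
  then show ?thesis by (cases "x = g") simp_all
qed

lemma resolvent_dist_le:
  fixes p x g a a\<^sub>0 l l\<^sub>0 :: "'a::real_inner"
  assumes p: "p = \<rho> *\<^sub>R (a + l) + x" and "0 \<le> \<rho>"
    and "0 \<le> inner (x - g) (a - a\<^sub>0)" "0 \<le> inner (x - g) (l - l\<^sub>0)"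
  shows "norm (x - g) \<le> norm (p - g) + \<rho> * (norm a\<^sub>0 + norm l\<^sub>0)"
proof -
  have "(p - \<rho> *\<^sub>R (a\<^sub>0 + l\<^sub>0)) - x = \<rho> *\<^sub>R ((a - a\<^sub>0) + (l - l\<^sub>0))"
    using p by (simp add: algebra_simps)
  then have "0 \<le> inner (x - g) ((p - \<rho> *\<^sub>R (a\<^sub>0 + l\<^sub>0)) - x)"
    using assms(2-4) by (simp add: inner_add_right)
  then have "norm (x - g) \<le> norm ((p - \<rho> *\<^sub>R (a\<^sub>0 + l\<^sub>0)) - g)"
    by (rule norm_le_of_inner_nonneg)
  also have "\<dots> = norm ((p - g) - \<rho> *\<^sub>R (a\<^sub>0 + l\<^sub>0))"
    by (simp add: algebra_simps)
  also have "\<dots> \<le> norm (p - g) + \<rho> * norm (a\<^sub>0 + l\<^sub>0)"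
    using norm_triangle_ineq4[of "p - g" "\<rho> *\<^sub>R (a\<^sub>0 + l\<^sub>0)"] \<open>0 \<le> \<rho>\<close> by simp
  also have "\<dots> \<le> norm (p - g) + \<rho> * (norm a\<^sub>0 + norm l\<^sub>0)"
    using \<open>0 \<le> \<rho>\<close> by (simp add: mult_left_mono norm_triangle_ineq)
  finally show ?thesis .
qed

lemma adjoint_norm_le:
  fixes G G\<^sub>a\<^sub>d\<^sub>j :: "'a::real_inner \<Rightarrow> 'a"
  assumes "G\<^sub>a\<^sub>d\<^sub>j \<eta> \<in> V" and adj: "\<And>\<xi>. \<xi> \<in> V \<Longrightarrow> inner (G \<xi>) \<eta> = inner \<xi> (G\<^sub>a\<^sub>d\<^sub>j \<eta>)"
    and bound: "\<And>\<xi>. \<xi> \<in> V \<Longrightarrow> norm (G \<xi>) \<le> K * norm \<xi>" and "0 \<le> K"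
  shows "norm (G\<^sub>a\<^sub>d\<^sub>j \<eta>) \<le> K * norm \<eta>"
proof -
  let ?g = "G\<^sub>a\<^sub>d\<^sub>j \<eta>"
  have "norm ?g * norm ?g = inner (G ?g) \<eta>"
    using adj[OF assms(1)] by (simp add: dot_square_norm power2_eq_square)
  also have "\<dots> \<le> norm (G ?g) * norm \<eta>" by (rule norm_cauchy_schwarz)
  also have "\<dots> \<le> norm ?g * (K * norm \<eta>)"
    using mult_right_mono[OF bound[OF assms(1)] norm_ge_zero[of \<eta>]] by (simp add: ac_simps)
  finally show ?thesis using \<open>0 \<le> K\<close> by (cases "?g = 0") simp_all
qed

lemma adjoint_of_identity:
  fixes G\<^sub>a\<^sub>d\<^sub>j :: "'a::real_inner \<Rightarrow> 'a"
  assumes "subspace V" "\<eta> \<in> V" "G\<^sub>a\<^sub>d\<^sub>j \<eta> \<in> V" and adj: "\<And>\<xi>. \<xi> \<in> V \<Longrightarrow> inner \<xi> \<eta> = inner \<xi> (G\<^sub>a\<^sub>d\<^sub>j \<eta>)"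
  shows "G\<^sub>a\<^sub>d\<^sub>j \<eta> = \<eta>"
proof -
  have "G\<^sub>a\<^sub>d\<^sub>j \<eta> - \<eta> \<in> V" by (rule subspace_diff[OF assms(1) assms(3) assms(2)])
  from adj[OF this] have "inner (G\<^sub>a\<^sub>d\<^sub>j \<eta> - \<eta>) (G\<^sub>a\<^sub>d\<^sub>j \<eta> - \<eta>) = 0"
    by (simp add: inner_diff_right)
  then show ?thesis by simp
qed

lemma relaxed_projection_step_le:
  fixes \<phi> s \<pi> \<tau> \<alpha> :: real
  assumes "0 < \<phi>" "\<phi> \<le> s" "0 \<le> \<pi>" "0 \<le> \<tau>" "\<tau> \<le> 2" "\<alpha> = \<tau> * \<phi> / \<pi>"
  shows "\<alpha>\<^sup>2 * \<pi> \<le> 2 * \<alpha> * s"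
proof (cases "\<pi> = 0")
  case False
  have "0 \<le> \<alpha>" using assms by simp
  have "\<alpha>\<^sup>2 * \<pi> = \<alpha> * (\<tau> * \<phi>)"
    using False assms(6) by (simp add: power2_eq_square)
  also have "\<dots> \<le> \<alpha> * (2 * s)"
    using \<open>0 \<le> \<alpha>\<close> assms(1,2,5) by (intro mult_left_mono) (auto intro: mult_mono)
  finally show ?thesis by simp
qed (use assms in simp)

lemma lower_bound_of_quadratic_le:
  fixes \<theta> p b r :: real
  assumes "0 \<le> p" "0 \<le> b" "0 < r" "\<theta> \<le> p * r\<^sup>2 + b * r"
  shows "min 1 (\<theta> / (p + b)) \<le> r"
proof (cases "1 \<le> r")
  case False
  then have "p * r\<^sup>2 \<le> p * r"
    using assms(1,3) by (intro mult_left_mono) (simp_all add: power2_eq_square)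
  then have "\<theta> \<le> (p + b) * r" using assms(4) by (simp add: algebra_simps)
  then have "\<theta> / (p + b) \<le> r"
    using assms(1-3) by (cases "p + b = 0") (simp_all add: divide_le_eq mult.commute less_le)
  then show ?thesis by simp
qed simp

lemma uniform_bounds_over_finite:
  fixes f :: "nat \<Rightarrow> 'i \<Rightarrow> real"
  assumes "finite I" "I \<noteq> {}"
    and bounds: "\<And>i. i \<in> I \<Longrightarrow> \<exists>l u. 0 < l \<and> (\<forall>k. l \<le> f k i \<and> f k i \<le> u)"
  shows "\<exists>l u. 0 < l \<and> l \<le> u \<and> (\<forall>i\<in>I. \<forall>k. l \<le> f k i \<and> f k i \<le> u)"
proof -
  have "\<exists>l u. 0 < l \<and> (\<forall>i\<in>I. \<forall>k. l \<le> f k i \<and> f k i \<le> u)"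
    using assms(1) bounds
  proof (induction I rule: finite_induct)
    case empty
    then show ?case by (intro exI[of _ 1]) simp
  next
    case (insert i I)
    then obtain l u l' u' where "0 < l" "\<forall>j\<in>I. \<forall>k. l \<le> f k j \<and> f k j \<le> u"
      and "0 < l'" "\<forall>k. l' \<le> f k i \<and> f k i \<le> u'"
      by (metis insertI1 insertI2)
    then show ?case
      by (intro exI[of _ "min l l'"] exI[of _ "max u u'"]) (auto simp: min.coboundedI1 min.coboundedI2 max.coboundedI1 max.coboundedI2)
  qed
  then obtain l u where "0 < l" and lu: "\<forall>i\<in>I. \<forall>k. l \<le> f k i \<and> f k i \<le> u" by blast
  moreover obtain i where "i \<in> I" using \<open>I \<noteq> {}\<close> by blast
  ultimately show ?thesis using lu by (meson order_trans)
qed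

lemma norm_diff_scaleR_square:
  fixes a b :: "'a::real_inner"
  shows "(norm (a - t *\<^sub>R b))\<^sup>2 = (norm a)\<^sup>2 - 2 * t * inner a b + t\<^sup>2 * (norm b)\<^sup>2"
  by (simp only: power2_norm_eq_inner)
     (simp add: inner_diff_left inner_diff_right inner_commute algebra_simps power2_eq_square)

lemma T_op_memD:
  assumes "t \<in> T_op A B C D \<xi>"
  obtains a where "a \<in> A \<xi>" "t = a + B \<xi> + C \<xi> + D \<xi>"
  using assms by (auto simp: T_op_def)

lemma D_lin_at_base:
  assumes "linear (D' u)"
  shows "D_lin D D' u u = D u"
  using assms by (simp add: D_lin_def linear_0)

section \<open>The projective splitting iteration\<close>

locale projective_splitting =
  fixes H :: "nat \<Rightarrow> 'a::real_inner set"
    and n :: nat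
    and G Gadj :: "nat \<Rightarrow> 'a \<Rightarrow> 'a"
    and A :: "nat \<Rightarrow> 'a \<Rightarrow> 'a set"
    and B C D :: "nat \<Rightarrow> 'a \<Rightarrow> 'a"
    and D' :: "nat \<Rightarrow> 'a \<Rightarrow> 'a \<Rightarrow> 'a"
    and ell m :: "nat \<Rightarrow> real"
    and \<beta> :: "nat \<Rightarrow> ereal"
    and ID :: "nat set"
    and \<tau>lo \<tau>hi \<theta>lo \<theta>hi \<rho>hat \<delta>hat \<gamma> :: real
    and z :: "nat \<Rightarrow> 'a"
    and w x y u :: "nat \<Rightarrow> nat \<Rightarrow> 'a"
    and v :: "nat \<Rightarrow> 'a"
    and \<rho> :: "nat \<Rightarrow> nat \<Rightarrow> real"
    and \<tau> \<alpha> \<phi> \<pi> :: "nat \<Rightarrow> real"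
  assumes n2: "n \<ge> 2"
    and H_sub: "\<forall>i\<le>n. closed_subspace (H i)"
    and H_n: "H n = H 0"
    and A1: "\<forall>i\<in>{1..n}. bounded_linear_between (H 0) (H i) (G i)"
    and A1n: "\<forall>\<xi>\<in>H 0. G n \<xi> = \<xi>"
    and adj: "\<forall>i\<in>{1..n}. \<forall>\<eta>\<in>H i. Gadj i \<eta> \<in> H 0 \<and>
                 (\<forall>\<xi>\<in>H 0. inner (G i \<xi>) \<eta> = inner \<xi> (Gadj i \<eta>))"
    and A2: "\<forall>i\<in>{1..n}. maximal_monotone_op (H i) (A i)"
    and A3: "\<forall>i\<in>{1..n}. (\<forall>\<xi>\<in>H i. B i \<xi> \<in> H i) \<and> monotone_fun_on (H i) (B i) \<and> 0 \<le> ell i \<and>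
               (\<forall>\<xi>\<in>H i. \<forall>\<eta>\<in>H i. norm (B i \<xi> - B i \<eta>) \<le> ell i * norm (\<xi> - \<eta>))"
    and A4: "\<forall>i\<in>{1..n}. (\<forall>\<xi>\<in>H i. C i \<xi> \<in> H i) \<and> 0 < \<beta> i \<and>
               (\<forall>\<xi>\<in>H i. \<forall>\<eta>\<in>H i. \<beta> i * ereal ((norm (C i \<xi> - C i \<eta>))\<^sup>2)
                                      \<le> ereal (inner (\<xi> - \<eta>) (C i \<xi> - C i \<eta>)))"
    and A5: "\<forall>i\<in>{1..n}. (\<forall>\<xi>\<in>H i. D i \<xi> \<in> H i) \<and> monotone_fun_on (H i) (D i) \<and> 0 \<le> m i \<and>
               (\<forall>\<xi>\<in>H i. (D i has_derivative D' i \<xi>) (at \<xi> within H i) \<and>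
                           (\<forall>h\<in>H i. D' i \<xi> h \<in> H i)) \<and>
               (\<forall>\<xi>\<in>H i. \<forall>\<eta>\<in>H i. \<forall>h\<in>H i.
                   norm (D' i \<xi> h - D' i \<eta> h) \<le> m i * norm (\<xi> - \<eta>) * norm h)"
    and A7: "ID \<subseteq> {1..n} \<and> (\<forall>i\<in>ID. 0 < m i) \<and>
               (\<forall>i\<in>{1..n} - ID. m i = 0 \<and> (\<forall>\<xi>\<in>H i. D i \<xi> = 0))"
    and par: "0 < \<tau>lo \<and> \<tau>lo < \<tau>hi \<and> \<tau>hi < 2 \<and> 0 < \<theta>lo \<and> \<theta>lo < \<theta>hi \<and> \<theta>hi < 2 \<and>
              0 < \<rho>hat \<and> 0 < \<delta>hat \<and> 0 < \<gamma>"
    and init: "z 0 \<in> H 0 \<and> (\<forall>i\<in>{1..n-1}. w 0 i \<in> H i)"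
    and wn: "\<forall>k. w k n = - (\<Sum>i=1..n-1. Gadj i (w k i))"
    and step_i: "\<forall>k. \<forall>i\<in>{1..n}. w k i \<in> T_op (A i) (B i) (C i) (D i) (G i (z k)) \<longrightarrow>
                   \<rho> k i = \<rho>hat \<and> x k i = G i (z k) \<and> y k i = w k i"
    and step_ii: "\<forall>k. \<forall>i\<in>ID. w k i \<notin> T_op (A i) (B i) (C i) (D i) (G i (z k)) \<longrightarrow>
                   0 < \<rho> k i \<and>
                   resolvent_rel (\<lambda>\<xi>. {\<rho> k i *\<^sub>R (a + D_lin (D i) (D' i) (G i (z k)) \<xi>) | a. a \<in> A i \<xi>})
                     (G i (z k) + \<rho> k i *\<^sub>R w k i - \<rho> k i *\<^sub>R (B i (G i (z k)) + C i (G i (z k))))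
                     (x k i) \<and>
                   \<theta>lo \<le> 4 * (ell i)\<^sup>2 * (\<rho> k i)\<^sup>2 + (real_of_ereal (inverse (\<beta> i)) + \<delta>hat) * \<rho> k i
                          + (m i * \<rho> k i * norm (x k i - G i (z k)))\<^sup>2 \<and>
                   4 * (ell i)\<^sup>2 * (\<rho> k i)\<^sup>2 + (real_of_ereal (inverse (\<beta> i)) + \<delta>hat) * \<rho> k i
                          + (m i * \<rho> k i * norm (x k i - G i (z k)))\<^sup>2 \<le> \<theta>hi \<and>
                   y k i = (1 / \<rho> k i) *\<^sub>R (G i (z k) - x k i) + w k i
                           + (B i (x k i) - B i (G i (z k)))
                           + (D i (x k i) - D_lin (D i) (D' i) (G i (z k)) (x k i))"
    and step_iii: "\<forall>k. \<forall>i\<in>{1..n} - ID. w k i \<notin> T_op (A i) (B i) (C i) (D i) (G i (z k)) \<longrightarrow>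
                   0 < \<rho> k i \<and>
                   resolvent_rel (\<lambda>\<xi>. {\<rho> k i *\<^sub>R a | a. a \<in> A i \<xi>})
                     (G i (z k) + \<rho> k i *\<^sub>R w k i - \<rho> k i *\<^sub>R (B i (G i (z k)) + C i (G i (z k))))
                     (x k i) \<and>
                   y k i = (1 / \<rho> k i) *\<^sub>R (G i (z k) - x k i) + w k i
                           + (B i (x k i) - B i (G i (z k)))"
    and u_def: "\<forall>k. \<forall>i\<in>{1..n-1}. u k i = x k i - G i (x k n)"
    and v_def: "\<forall>k. v k = (\<Sum>i=1..n. Gadj i (y k i))"
    and phi_def: "\<forall>k. \<phi> k = inner (z k) (v k) + (\<Sum>i=1..n-1. inner (w k i) (u k i))
                     - (\<Sum>i=1..n. inner (x k i) (y k i)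
                          + real_of_ereal (inverse (4 * \<beta> i)) * (norm (x k i - G i (z k)))\<^sup>2)"
    and pi_def: "\<forall>k. \<pi> k = (1 / \<gamma>) * (norm (v k))\<^sup>2 + (\<Sum>i=1..n-1. (norm (u k i))\<^sup>2)"
    and upd_pos: "\<forall>k. 0 < \<phi> k \<longrightarrow>
                   \<tau>lo \<le> \<tau> k \<and> \<tau> k \<le> \<tau>hi \<and> \<alpha> k = \<tau> k * \<phi> k / \<pi> k \<and>
                   z (Suc k) = z k - (\<alpha> k / \<gamma>) *\<^sub>R v k \<and>
                   (\<forall>i\<in>{1..n-1}. w (Suc k) i = w k i - \<alpha> k *\<^sub>R u k i)"
    and upd_nonpos: "\<forall>k. \<not> 0 < \<phi> k \<longrightarrow>
                   z (Suc k) = z k \<and> (\<forall>i\<in>{1..n-1}. w (Suc k) i = w k i)"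
    and A8: "\<forall>i\<in>{1..n} - ID. \<exists>\<rho>lo \<rho>up. 0 < \<rho>lo \<and> \<rho>lo \<le> \<rho>up \<and>
               ereal \<rho>up < inverse (inverse (4 * \<beta> i) + ereal (ell i)) \<and>
               (\<forall>k. w k i \<notin> T_op (A i) (B i) (C i) (D i) (G i (z k)) \<longrightarrow>
                     \<rho>lo \<le> \<rho> k i \<and> \<rho> k i \<le> \<rho>up)"

begin

lemma subspace_H: "i \<le> n \<Longrightarrow> subspace (H i)"
  using H_sub by (simp add: closed_subspace_def)

lemma n_mem: "n \<in> {1..n}"
  using n2 by simp

lemma sum_split_last: "(\<Sum>i=1..n. f i) = (\<Sum>i=1..n-1. f i) + f n"
  using n2 by (cases n) (auto simp: sum.cl_ivl_Suc)

lemma G_maps: "i \<in> {1..n} \<Longrightarrow> \<xi> \<in> H 0 \<Longrightarrow> G i \<xi> \<in> H i"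
  using A1 by (auto simp: bounded_linear_between_def)

lemma G_norm_bound:
  assumes "i \<in> {1..n}"
  obtains K where "0 \<le> K" "\<And>\<xi>. \<xi> \<in> H 0 \<Longrightarrow> norm (G i \<xi>) \<le> K * norm \<xi>"
proof -
  obtain K where K: "\<forall>\<xi>\<in>H 0. norm (G i \<xi>) \<le> K * norm \<xi>"
    using A1 assms unfolding bounded_linear_between_def by blast
  have "norm (G i \<xi>) \<le> max K 0 * norm \<xi>" if "\<xi> \<in> H 0" for \<xi>
    using K that mult_right_mono[OF max.cobounded1[of K 0] norm_ge_zero[of \<xi>]] by fastforce
  then show ?thesis using that[of "max K 0"] by simp
qed

lemma Gadj_maps: "i \<in> {1..n} \<Longrightarrow> \<eta> \<in> H i \<Longrightarrow> Gadj i \<eta> \<in> H 0"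
  using adj by blast

lemma adjoint: "i \<in> {1..n} \<Longrightarrow> \<xi> \<in> H 0 \<Longrightarrow> \<eta> \<in> H i \<Longrightarrow> inner (G i \<xi>) \<eta> = inner \<xi> (Gadj i \<eta>)"
  using adj by blast

lemma Gadj_n:
  assumes "\<eta> \<in> H 0"
  shows "Gadj n \<eta> = \<eta>"
proof (rule adjoint_of_identity[OF subspace_H[OF le0] assms])
  have "\<eta> \<in> H n" using assms H_n by simp
  then show "Gadj n \<eta> \<in> H 0" by (rule Gadj_maps[OF n_mem])
  show "inner \<xi> \<eta> = inner \<xi> (Gadj n \<eta>)" if "\<xi> \<in> H 0" for \<xi>
    using adjoint[OF n_mem that \<open>\<eta> \<in> H n\<close>] A1n that by simp
qed

lemma A_monotone: "i \<in> {1..n} \<Longrightarrow> a \<in> A i \<xi> \<Longrightarrow> b \<in> A i \<eta> \<Longrightarrow> 0 \<le> inner (\<xi> - \<eta>) (a - b)"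
  using A2 by (auto simp: maximal_monotone_op_def monotone_op_def)

lemma A_graph_in: "i \<in> {1..n} \<Longrightarrow> a \<in> A i \<xi> \<Longrightarrow> \<xi> \<in> H i \<and> a \<in> H i"
  using A2 unfolding maximal_monotone_op_def monotone_op_def by blast

lemma D_derivative: "i \<in> {1..n} \<Longrightarrow> \<xi> \<in> H i \<Longrightarrow> (D i has_derivative D' i \<xi>) (at \<xi> within H i)"
  using A5 by blast

lemma rho_pos: "i \<in> {1..n} \<Longrightarrow> 0 < \<rho> k i"
  using step_i step_ii step_iii par
  by (cases "w k i \<in> T_op (A i) (B i) (C i) (D i) (G i (z k))"; cases "i \<in> ID") auto

definition prox_arg :: "nat \<Rightarrow> nat \<Rightarrow> 'a" where
  "prox_arg k i = G i (z k) + \<rho> k i *\<^sub>R w k i - \<rho> k i *\<^sub>R (B i (G i (z k)) + C i (G i (z k)))"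

text \<open>The model of \<open>D\<^sub>i\<close> used in the resolvent step of iteration \<open>k\<close>: its linearization at
  \<open>G\<^sub>i z\<^sup>k\<close> in case (ii), and \<open>D\<^sub>i = 0\<close> itself in case (iii).\<close>
definition D_model :: "nat \<Rightarrow> nat \<Rightarrow> 'a \<Rightarrow> 'a" where
  "D_model k i = (if i \<in> ID then D_lin (D i) (D' i) (G i (z k)) else (\<lambda>_. 0))"

lemma resolvent_step:
  assumes "i \<in> {1..n}" "w k i \<notin> T_op (A i) (B i) (C i) (D i) (G i (z k))"
  obtains a where "a \<in> A i (x k i)" "prox_arg k i = \<rho> k i *\<^sub>R (a + D_model k i (x k i)) + x k i"
proof (cases "i \<in> ID")
  case True
  then have "prox_arg k i \<in> (\<lambda>s. s + x k i) `
      {\<rho> k i *\<^sub>R (a + D_model k i (x k i)) | a. a \<in> A i (x k i)}"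
    using step_ii assms(2) unfolding resolvent_rel_def prox_arg_def D_model_def by simp
  then show ?thesis using that by blast
next
  case False
  then have "prox_arg k i \<in> (\<lambda>s. s + x k i) ` {\<rho> k i *\<^sub>R a | a. a \<in> A i (x k i)}"
    using step_iii assms unfolding resolvent_rel_def prox_arg_def by simp
  then show ?thesis using that False by (auto simp: D_model_def)
qed

lemma D_model_at_base:
  assumes "i \<in> {1..n}" "G i (z k) \<in> H i"
  shows "D_model k i (G i (z k)) = D i (G i (z k))"
proof (cases "i \<in> ID")
  case True
  have "linear (D' i (G i (z k)))"
    using has_derivative_linear[OF D_derivative[OF assms]] .
  with True show ?thesis by (simp add: D_model_def D_lin_at_base)
qed (use A7 assms in \<open>auto simp: D_model_def\<close>)

lemma y_eq:
  assumes i: "i \<in> {1..n}"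
  shows "y k i = (1 / \<rho> k i) *\<^sub>R (G i (z k) - x k i) + w k i
           + (B i (x k i) - B i (G i (z k))) + (D i (x k i) - D_model k i (x k i))"
proof (cases "w k i \<in> T_op (A i) (B i) (C i) (D i) (G i (z k))")
  case True
  then have "G i (z k) \<in> H i" using A_graph_in[OF i] by (blast elim: T_op_memD)
  then show ?thesis using step_i True i D_model_at_base[OF i] by simp
next
  case nontrivial: False
  show ?thesis
  proof (cases "i \<in> ID")
    case True
    then show ?thesis using step_ii nontrivial by (simp add: D_model_def)
  next
    case False
    obtain a where "a \<in> A i (x k i)" using resolvent_step[OF i nontrivial] .
    then have "D i (x k i) = 0" using A7 A_graph_in i False by blast
    with False show ?thesis using step_iii i nontrivial by (simp add: D_model_def)
  qed
qed

lemma iterate_in_graph: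
  assumes i: "i \<in> {1..n}"
  obtains a where "a \<in> A i (x k i)" "y k i = a + B i (x k i) + C i (G i (z k)) + D i (x k i)"
proof (cases "w k i \<in> T_op (A i) (B i) (C i) (D i) (G i (z k))")
  case True
  then show ?thesis using step_i i that by (auto elim: T_op_memD)
next
  case False
  obtain a where a: "a \<in> A i (x k i)"
    and p: "prox_arg k i = \<rho> k i *\<^sub>R (a + D_model k i (x k i)) + x k i"
    using resolvent_step[OF i False] .
  have "G i (z k) - x k i
      = \<rho> k i *\<^sub>R (a + D_model k i (x k i) - w k i + B i (G i (z k)) + C i (G i (z k)))"
    using p unfolding prox_arg_def by (simp add: algebra_simps)
  then have "(1 / \<rho> k i) *\<^sub>R (G i (z k) - x k i)
      = a + D_model k i (x k i) - w k i + B i (G i (z k)) + C i (G i (z k))"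
    using rho_pos[OF i, of k] by simp
  moreover note y_eq[OF i, of k]
  ultimately show ?thesis using that[OF a] by (simp add: algebra_simps)
qed

lemma x_in: "i \<in> {1..n} \<Longrightarrow> x k i \<in> H i"
  by (meson A_graph_in iterate_in_graph)

lemma y_in:
  assumes i: "i \<in> {1..n}" and "z k \<in> H 0"
  shows "y k i \<in> H i"
proof -
  obtain a where a: "a \<in> A i (x k i)" and y: "y k i = a + B i (x k i) + C i (G i (z k)) + D i (x k i)"
    using iterate_in_graph[OF i] .
  have "a \<in> H i" "x k i \<in> H i" using A_graph_in[OF i a] by simp_all
  moreover have "G i (z k) \<in> H i" using G_maps[OF i \<open>z k \<in> H 0\<close>] .
  ultimately show ?thesis
    unfolding y using A3 A4 A5 i subspace_H[of i] by (auto intro!: subspace_add)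
qed

lemma x_n_in: "x k n \<in> H 0"
  using x_in[OF n_mem] H_n by simp

lemma u_in: "i \<in> {1..n-1} \<Longrightarrow> u k i \<in> H i"
  using u_def x_in G_maps[OF _ x_n_in] subspace_H by (auto intro!: subspace_diff)

lemma v_in: "z k \<in> H 0 \<Longrightarrow> v k \<in> H 0"
  unfolding v_def[rule_format] using Gadj_maps y_in subspace_H[OF le0]
  by (auto intro!: subspace_sum)

lemma iterates_in: "z k \<in> H 0 \<and> (\<forall>i\<in>{1..n-1}. w k i \<in> H i)"
proof (induction k)
  case 0
  then show ?case using init by simp
next
  case (Suc k)
  then have "z k \<in> H 0" and "\<forall>i\<in>{1..n-1}. w k i \<in> H i" by auto
  then show ?case
    using upd_pos upd_nonpos v_in u_in subspace_H
    by (cases "0 < \<phi> k") (auto intro!: subspace_diff subspace_scale)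
qed

lemma z_in: "z k \<in> H 0"
  using iterates_in by blast

lemma w_in: "i \<in> {1..n-1} \<Longrightarrow> w k i \<in> H i"
  using iterates_in by blast

lemma Gz_in: "i \<in> {1..n} \<Longrightarrow> G i (z k) \<in> H i"
  using G_maps z_in by blast

lemma inverse_\<beta>_nonneg:
  assumes "i \<in> {1..n}"
  shows "0 \<le> real_of_ereal (inverse (\<beta> i))"
proof -
  have "0 < \<beta> i" using A4 assms by blast
  then show ?thesis by (cases "\<beta> i") auto
qed

lemma rho_upper_bound:
  assumes i: "i \<in> {1..n}"
  obtains R where "\<And>k. \<rho> k i \<le> R"
proof -
  obtain R\<^sub>3 where R\<^sub>3: "\<And>k. i \<notin> ID \<Longrightarrow> w k i \<notin> T_op (A i) (B i) (C i) (D i) (G i (z k)) \<Longrightarrow> \<rho> k i \<le> R\<^sub>3"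
    using A8 i by (cases "i \<in> ID") blast+
  have "\<rho> k i \<le> max \<rho>hat (max (\<theta>hi / \<delta>hat) R\<^sub>3)" for k
  proof (cases "w k i \<in> T_op (A i) (B i) (C i) (D i) (G i (z k))")
    case True
    then show ?thesis using step_i i by auto
  next
    case nontrivial: False
    show ?thesis
    proof (cases "i \<in> ID")
      case True
      with nontrivial step_ii have "0 < \<rho> k i"
        and "4 * (ell i)\<^sup>2 * (\<rho> k i)\<^sup>2 + (real_of_ereal (inverse (\<beta> i)) + \<delta>hat) * \<rho> k i
               + (m i * \<rho> k i * norm (x k i - G i (z k)))\<^sup>2 \<le> \<theta>hi"
        by auto
      moreover have "0 \<le> real_of_ereal (inverse (\<beta> i)) * \<rho> k i"
        using inverse_\<beta>_nonneg[OF i] \<open>0 < \<rho> k i\<close> by simp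
      ultimately have "\<delta>hat * \<rho> k i \<le> \<theta>hi"
        by (smt (verit, best) distrib_right mult_nonneg_nonneg zero_le_power2)
      then have "\<rho> k i \<le> \<theta>hi / \<delta>hat" using par by (simp add: field_simps)
      then show ?thesis by simp
    next
      case False
      then show ?thesis using R\<^sub>3 nontrivial by fastforce
    qed
  qed
  then show ?thesis using that by blast
qed

lemma rho_Bseq: "i \<in> {1..n} \<Longrightarrow> Bseq (\<lambda>k. \<rho> k i)"
  by (rule rho_upper_bound) (use rho_pos in \<open>auto intro!: BseqI' simp: abs_of_pos\<close>)

lemma stepsize_ii_lower_bound:
  assumes "i \<in> ID" "w k i \<notin> T_op (A i) (B i) (C i) (D i) (G i (z k))"
    and X: "norm (x k i - G i (z k)) \<le> X"
  shows "min 1 (\<theta>lo / (4 * (ell i)\<^sup>2 + (m i)\<^sup>2 * X\<^sup>2 + (real_of_ereal (inverse (\<beta> i)) + \<delta>hat)))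
           \<le> \<rho> k i"
proof -
  have i: "i \<in> {1..n}" using A7 assms(1) by blast
  have \<theta>lo_le: "\<theta>lo \<le> 4 * (ell i)\<^sup>2 * (\<rho> k i)\<^sup>2 + (real_of_ereal (inverse (\<beta> i)) + \<delta>hat) * \<rho> k i
      + (m i * \<rho> k i * norm (x k i - G i (z k)))\<^sup>2"
    using step_ii assms(1,2) by blast
  have "(m i * norm (x k i - G i (z k)))\<^sup>2 \<le> (m i)\<^sup>2 * X\<^sup>2"
    using X norm_ge_zero by (simp add: power_mult_distrib mult_left_mono power_mono)
  then have "(m i * norm (x k i - G i (z k)))\<^sup>2 * (\<rho> k i)\<^sup>2 \<le> (m i)\<^sup>2 * X\<^sup>2 * (\<rho> k i)\<^sup>2"
    by (rule mult_right_mono) simp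
  then have "\<theta>lo \<le> (4 * (ell i)\<^sup>2 + (m i)\<^sup>2 * X\<^sup>2) * (\<rho> k i)\<^sup>2
      + (real_of_ereal (inverse (\<beta> i)) + \<delta>hat) * \<rho> k i"
    using \<theta>lo_le by (simp add: power_mult_distrib algebra_simps)
  then show ?thesis
    using rho_pos[OF i] inverse_\<beta>_nonneg[OF i] par by (intro lower_bound_of_quadratic_le) auto
qed

lemma C_lipschitz:
  assumes "i \<in> {1..n}" "\<xi> \<in> H i" "\<eta> \<in> H i"
  shows "norm (C i \<xi> - C i \<eta>) \<le> real_of_ereal (inverse (\<beta> i)) * norm (\<xi> - \<eta>)"
  using A4 assms by (intro cocoercive_lipschitz) auto

lemma D_bounded_on_balls:
  assumes i: "i \<in> {1..n}"
  obtains M where "\<And>\<xi>. \<xi> \<in> H i \<Longrightarrow> norm \<xi> \<le> R \<Longrightarrow> norm (D i \<xi>) \<le> M"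
    and "\<And>\<xi> h. \<xi> \<in> H i \<Longrightarrow> norm \<xi> \<le> R \<Longrightarrow> h \<in> H i \<Longrightarrow> norm (D' i \<xi> h) \<le> M * norm h"
proof -
  have "subspace (H i)" using i subspace_H by simp
  moreover have "0 \<le> m i"
    and "\<And>\<xi> \<eta> h. \<xi> \<in> H i \<Longrightarrow> \<eta> \<in> H i \<Longrightarrow> h \<in> H i \<Longrightarrow>
           norm (D' i \<xi> h - D' i \<eta> h) \<le> m i * norm (\<xi> - \<eta>) * norm h"
    using A5 i by blast+
  ultimately show ?thesis
    using lipschitz_derivative_bounded_on_balls[OF _ D_derivative[OF i]] that by blast
qed

lemma D_model_monotone:
  assumes i: "i \<in> {1..n}" and "\<xi> \<in> H i" "\<eta> \<in> H i"
  shows "0 \<le> inner (\<xi> - \<eta>) (D_model k i \<xi> - D_model k i \<eta>)"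
proof (cases "i \<in> ID")
  case True
  have "linear (D' i (G i (z k)))"
    using has_derivative_linear[OF D_derivative[OF i Gz_in[OF i]]] .
  then have "D_model k i \<xi> - D_model k i \<eta> = D' i (G i (z k)) (\<xi> - \<eta>)"
    using True by (simp add: D_model_def D_lin_def linear_diff algebra_simps)
  moreover have "0 \<le> inner (\<xi> - \<eta>) (D' i (G i (z k)) (\<xi> - \<eta>))"
    using A5 i assms subspace_H[of i]
    by (intro monotone_imp_derivative_nonneg[OF subspace_H D_derivative])
       (auto simp: Gz_in subspace_diff)
  ultimately show ?thesis by simp
qed (simp add: D_model_def)

lemma D_Bseq:
  assumes i: "i \<in> {1..n}" and "\<And>k. s k \<in> H i" "Bseq s"
  shows "Bseq (\<lambda>k. D i (s k))"
proof -
  obtain R where R: "\<forall>k. norm (s k) \<le> R" using BseqE[OF \<open>Bseq s\<close>] by blast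
  obtain M where M: "\<And>\<xi>. \<xi> \<in> H i \<Longrightarrow> norm \<xi> \<le> R \<Longrightarrow> norm (D i \<xi>) \<le> M"
    using D_bounded_on_balls[OF i, of R] by metis
  show ?thesis
    using M[OF assms(2)] R by (intro BseqI'[of _ M]) simp
qed

lemma B_Bseq:
  assumes i: "i \<in> {1..n}" and "\<And>k. s k \<in> H i" "Bseq s"
  shows "Bseq (\<lambda>k. B i (s k))"
proof (rule Bseq_lipschitz_comp[where V = "H i" and L = "ell i" and F = "B i"])
  show "norm (B i \<xi> - B i \<eta>) \<le> ell i * norm (\<xi> - \<eta>)" if "\<xi> \<in> H i" "\<eta> \<in> H i" for \<xi> \<eta>
    using A3 i that by blast
  show "0 \<in> H i" using i subspace_H by (simp add: subspace_0)
qed (use assms in auto)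

lemma C_Bseq:
  assumes i: "i \<in> {1..n}" and "\<And>k. s k \<in> H i" "Bseq s"
  shows "Bseq (\<lambda>k. C i (s k))"
proof (rule Bseq_lipschitz_comp[where F = "C i", OF C_lipschitz[OF i]])
  show "0 \<in> H i" using i subspace_H by (simp add: subspace_0)
qed (use assms in auto)

section \<open>Fej\<acute>er monotonicity and boundedness\<close>

context
  fixes \<zeta> :: 'a and q :: "nat \<Rightarrow> 'a"
  assumes \<zeta>_in: "\<zeta> \<in> H 0"
    and q_in_T: "\<And>i. i \<in> {1..n} \<Longrightarrow> q i \<in> T_op (A i) (B i) (C i) (D i) (G i \<zeta>)"
    and q_sum: "(\<Sum>i=1..n. Gadj i (q i)) = 0"
begin

lemma q_in: "i \<in> {1..n} \<Longrightarrow> q i \<in> H i"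
  using q_in_T A_graph_in A3 A4 A5 G_maps[OF _ \<zeta>_in] subspace_H
  by (fastforce elim!: T_op_memD intro!: subspace_add)

lemma separation_term_nonneg:
  assumes i: "i \<in> {1..n}"
  shows "0 \<le> inner (x k i - G i \<zeta>) (y k i - q i)
              + real_of_ereal (inverse (4 * \<beta> i)) * (norm (x k i - G i (z k)))\<^sup>2"
proof -
  obtain a where a: "a \<in> A i (x k i)" and y: "y k i = a + B i (x k i) + C i (G i (z k)) + D i (x k i)"
    using iterate_in_graph[OF i] .
  obtain a\<^sub>0 where a\<^sub>0: "a\<^sub>0 \<in> A i (G i \<zeta>)" and q: "q i = a\<^sub>0 + B i (G i \<zeta>) + C i (G i \<zeta>) + D i (G i \<zeta>)"
    using q_in_T[OF i] by (rule T_op_memD)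
  have "G i \<zeta> \<in> H i" "G i (z k) \<in> H i" "x k i \<in> H i"
    using G_maps[OF i \<zeta>_in] Gz_in[OF i] x_in[OF i] .
  then have B: "0 \<le> inner (x k i - G i \<zeta>) (B i (x k i) - B i (G i \<zeta>))"
    and D: "0 \<le> inner (x k i - G i \<zeta>) (D i (x k i) - D i (G i \<zeta>))"
    using A3 A5 i by (auto simp: monotone_fun_on_def)
  have C: "0 \<le> inner ((x k i - G i (z k)) + (G i (z k) - G i \<zeta>)) (C i (G i (z k)) - C i (G i \<zeta>))
               + real_of_ereal (inverse (4 * \<beta> i)) * (norm (x k i - G i (z k)))\<^sup>2"
    using A4 i \<open>G i \<zeta> \<in> H i\<close> \<open>G i (z k) \<in> H i\<close> by (intro cocoercive_gap_nonneg) auto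
  have "y k i - q i = (a - a\<^sub>0) + (B i (x k i) - B i (G i \<zeta>)) + (D i (x k i) - D i (G i \<zeta>))
      + (C i (G i (z k)) - C i (G i \<zeta>))"
    using y q by (simp add: algebra_simps)
  then show ?thesis
    using A_monotone[OF i a a\<^sub>0] B C D by (simp add: inner_add_right)
qed

text \<open>With \<open>p\<^sup>* = (\<zeta>, q\<^sub>1, \<dots>, q\<^sub>n\<^sub>-\<^sub>1)\<close>, a point of the extended solution set, \<open>dist_sq k\<close> is
  \<open>\<parallel>p\<^sup>k - p\<^sup>*\<parallel>\<^sub>\<gamma>\<^sup>2\<close> and \<open>gap k = \<phi>\<^sub>k(p\<^sup>k) - \<phi>\<^sub>k(p\<^sup>*)\<close>, the function \<open>\<phi>\<^sub>k\<close> being affine.\<close>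
definition dist_sq :: "nat \<Rightarrow> real" where
  "dist_sq k = \<gamma> * (norm (z k - \<zeta>))\<^sup>2 + (\<Sum>i=1..n-1. (norm (w k i - q i))\<^sup>2)"

definition gap :: "nat \<Rightarrow> real" where
  "gap k = inner (z k - \<zeta>) (v k) + (\<Sum>i=1..n-1. inner (w k i - q i) (u k i))"

lemma inner_\<zeta>_v: "inner \<zeta> (v k) = (\<Sum>i=1..n. inner (G i \<zeta>) (y k i))"
  unfolding v_def[rule_format] inner_sum_right
  by (rule sum.cong) (auto simp: adjoint[OF _ \<zeta>_in y_in[OF _ z_in]])

lemma sum_inner_G\<zeta>_q: "(\<Sum>i=1..n. inner (G i \<zeta>) (q i)) = 0"
proof -
  have "(\<Sum>i=1..n. inner (G i \<zeta>) (q i)) = inner \<zeta> (\<Sum>i=1..n. Gadj i (q i))"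
    unfolding inner_sum_right by (rule sum.cong) (auto simp: adjoint[OF _ \<zeta>_in q_in])
  then show ?thesis using q_sum by simp
qed

lemma sum_inner_q_u: "(\<Sum>i=1..n-1. inner (q i) (u k i)) = (\<Sum>i=1..n. inner (q i) (x k i))"
proof -
  have q_n: "q n = - (\<Sum>i=1..n-1. Gadj i (q i))"
    using q_sum sum_split_last[of "\<lambda>i. Gadj i (q i)"] Gadj_n[of "q n"] q_in[OF n_mem] H_n
    by (simp add: eq_neg_iff_add_eq_0 add.commute)
  have "(\<Sum>i=1..n-1. inner (q i) (u k i))
      = (\<Sum>i=1..n-1. inner (q i) (x k i) - inner (x k n) (Gadj i (q i)))"
  proof (rule sum.cong)
    fix i assume i: "i \<in> {1..n-1}"
    then have "i \<in> {1..n}" by auto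
    then have "inner (q i) (G i (x k n)) = inner (x k n) (Gadj i (q i))"
      using adjoint[OF _ x_n_in q_in] by (simp add: inner_commute)
    then show "inner (q i) (u k i) = inner (q i) (x k i) - inner (x k n) (Gadj i (q i))"
      using u_def i by (simp add: inner_diff_right)
  qed simp
  also have "\<dots> = (\<Sum>i=1..n. inner (q i) (x k i))"
    using sum_split_last[of "\<lambda>i. inner (q i) (x k i)"] q_n
    by (simp add: sum_subtractf inner_sum_right inner_commute)
  finally show ?thesis .
qed

lemma gap_minus_phi:
  "gap k - \<phi> k = (\<Sum>i=1..n. inner (x k i - G i \<zeta>) (y k i - q i)
                    + real_of_ereal (inverse (4 * \<beta> i)) * (norm (x k i - G i (z k)))\<^sup>2)"
proof -
  have "gap k - \<phi> k = (\<Sum>i=1..n. inner (x k i) (y k i)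
                    + real_of_ereal (inverse (4 * \<beta> i)) * (norm (x k i - G i (z k)))\<^sup>2)
      - inner \<zeta> (v k) - (\<Sum>i=1..n-1. inner (q i) (u k i))"
    unfolding gap_def phi_def[rule_format] by (simp add: inner_diff_left sum_subtractf)
  then show ?thesis
    unfolding inner_\<zeta>_v sum_inner_q_u using sum_inner_G\<zeta>_q
    by (simp add: sum.distrib sum_subtractf inner_diff_left inner_diff_right inner_commute)
qed

lemma phi_le_gap: "\<phi> k \<le> gap k"
proof -
  have "0 \<le> gap k - \<phi> k"
    unfolding gap_minus_phi by (rule sum_nonneg) (rule separation_term_nonneg)
  then show ?thesis by simp
qed

lemma pi_nonneg: "0 \<le> \<pi> k"
  using pi_def par by (simp add: sum_nonneg)

lemma dist_sq_Suc_le: "dist_sq (Suc k) \<le> dist_sq k"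
proof (cases "0 < \<phi> k")
  case True
  with upd_pos have step: "\<tau>lo \<le> \<tau> k" "\<tau> k \<le> \<tau>hi" "\<alpha> k = \<tau> k * \<phi> k / \<pi> k"
    "z (Suc k) - \<zeta> = (z k - \<zeta>) - (\<alpha> k / \<gamma>) *\<^sub>R v k"
    "\<And>i. i \<in> {1..n-1} \<Longrightarrow> w (Suc k) i - q i = (w k i - q i) - \<alpha> k *\<^sub>R u k i"
    by (auto simp: algebra_simps)
  have "\<gamma> * (norm (z (Suc k) - \<zeta>))\<^sup>2 = \<gamma> * (norm (z k - \<zeta>))\<^sup>2 - 2 * \<alpha> k * inner (z k - \<zeta>) (v k)
      + (\<alpha> k)\<^sup>2 * ((1 / \<gamma>) * (norm (v k))\<^sup>2)"
    unfolding step(4) norm_diff_scaleR_square using par by (simp add: field_simps power2_eq_square)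
  moreover have "(\<Sum>i=1..n-1. (norm (w (Suc k) i - q i))\<^sup>2) = (\<Sum>i=1..n-1. (norm (w k i - q i))\<^sup>2)
     - 2 * \<alpha> k * (\<Sum>i=1..n-1. inner (w k i - q i) (u k i)) + (\<alpha> k)\<^sup>2 * (\<Sum>i=1..n-1. (norm (u k i))\<^sup>2)"
    by (simp add: step(5) norm_diff_scaleR_square sum.distrib sum_subtractf sum_distrib_left)
  ultimately have "dist_sq (Suc k) = dist_sq k - 2 * \<alpha> k * gap k + (\<alpha> k)\<^sup>2 * \<pi> k"
    unfolding dist_sq_def gap_def pi_def[rule_format] by (simp add: algebra_simps)
  moreover have "(\<alpha> k)\<^sup>2 * \<pi> k \<le> 2 * \<alpha> k * gap k"
    using step(1,2) par
    by (intro relaxed_projection_step_le[OF True phi_le_gap pi_nonneg _ _ step(3)]) auto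
  ultimately show ?thesis by simp
next
  case False
  then show ?thesis using upd_nonpos[rule_format, OF False] by (simp add: dist_sq_def)
qed

lemma dist_sq_le_initial: "dist_sq k \<le> dist_sq 0"
  using dist_sq_Suc_le by (induction k) (auto intro: order_trans)

lemma z_Bseq: "Bseq z"
proof (rule BseqI')
  fix k
  have "\<gamma> * (norm (z k - \<zeta>))\<^sup>2 \<le> dist_sq 0"
    using dist_sq_le_initial[of k] unfolding dist_sq_def by (smt (verit) sum_nonneg zero_le_power2)
  then have "norm (z k - \<zeta>) \<le> sqrt (dist_sq 0 / \<gamma>)"
    using par by (simp add: real_le_rsqrt field_simps)
  then show "norm (z k) \<le> norm \<zeta> + sqrt (dist_sq 0 / \<gamma>)"
    using norm_triangle_sub[of "z k" \<zeta>] by linarith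
qed

lemma w_Bseq_below_n:
  assumes i: "i \<in> {1..n-1}"
  shows "Bseq (\<lambda>k. w k i)"
proof (rule BseqI')
  fix k
  have "(norm (w k i - q i))\<^sup>2 \<le> (\<Sum>j=1..n-1. (norm (w k j - q j))\<^sup>2)"
    using i by (intro member_le_sum) auto
  then have "(norm (w k i - q i))\<^sup>2 \<le> dist_sq 0"
    using dist_sq_le_initial[of k] par unfolding dist_sq_def
    by (smt (verit) mult_nonneg_nonneg zero_le_power2)
  then have "norm (w k i - q i) \<le> sqrt (dist_sq 0)" by (simp add: real_le_rsqrt)
  then show "norm (w k i) \<le> norm (q i) + sqrt (dist_sq 0)"
    using norm_triangle_sub[of "w k i" "q i"] by linarith
qed

lemma w_Bseq:
  assumes i: "i \<in> {1..n}"
  shows "Bseq (\<lambda>k. w k i)"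
proof (cases "i = n")
  case True
  have "Bseq (\<lambda>k. Gadj j (w k j))" if j: "j \<in> {1..n-1}" for j
  proof -
    from j have j': "j \<in> {1..n}" by auto
    obtain K where K: "0 \<le> K" "\<And>\<xi>. \<xi> \<in> H 0 \<Longrightarrow> norm (G j \<xi>) \<le> K * norm \<xi>"
      using G_norm_bound[OF j'] by blast
    have Gadj_le: "norm (Gadj j (w k j)) \<le> K * norm (w k j)" for k
      by (rule adjoint_norm_le[where V = "H 0" and G = "G j"])
         (use Gadj_maps[OF j' w_in[OF j]] adjoint[OF j' _ w_in[OF j]] K in auto)
    have "Bseq (\<lambda>k. K * norm (w k j))"
      using w_Bseq_below_n[OF j] by (intro Bseq_mult Bfun_const) (simp add: Bseq_norm_iff)
    then show ?thesis by (rule Bseq_norm_le[OF Gadj_le])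
  qed
  then have "Bseq (\<lambda>k. \<Sum>j=1..n-1. Gadj j (w k j))"
    by (intro Bseq_sum) auto
  then show ?thesis
    using True wn by (simp add: Bseq_minus_iff)
next
  case False
  then have "i \<in> {1..n-1}" using i by auto
  then show ?thesis by (rule w_Bseq_below_n)
qed

lemma Gz_Bseq:
  assumes i: "i \<in> {1..n}"
  shows "Bseq (\<lambda>k. G i (z k))"
proof -
  obtain K where K: "0 \<le> K" "\<And>\<xi>. \<xi> \<in> H 0 \<Longrightarrow> norm (G i \<xi>) \<le> K * norm \<xi>"
    using G_norm_bound[OF i] by blast
  have "Bseq (\<lambda>k. K * norm (z k))"
    using z_Bseq by (intro Bseq_mult Bfun_const) (simp add: Bseq_norm_iff)
  then show ?thesis by (rule Bseq_norm_le[OF K(2)[OF z_in]])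
qed

lemma D_model_Bseq:
  assumes i: "i \<in> {1..n}" and s: "\<And>k. s k \<in> H i" "Bseq s"
  shows "Bseq (\<lambda>k. D_model k i (s k))"
proof (cases "i \<in> ID")
  case True
  obtain R where R: "\<forall>k. norm (G i (z k)) \<le> R" using BseqE[OF Gz_Bseq[OF i]] by blast
  obtain M where M: "\<And>\<xi>. \<xi> \<in> H i \<Longrightarrow> norm \<xi> \<le> R \<Longrightarrow> norm (D i \<xi>) \<le> M"
    "\<And>\<xi> h. \<xi> \<in> H i \<Longrightarrow> norm \<xi> \<le> R \<Longrightarrow> h \<in> H i \<Longrightarrow> norm (D' i \<xi> h) \<le> M * norm h"
    using D_bounded_on_balls[OF i, of R] by metis
  have "norm (D_model k i (s k)) \<le> M + M * norm (s k - G i (z k))" for k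
  proof -
    have "s k - G i (z k) \<in> H i"
      using subspace_diff[OF _ s(1) Gz_in[OF i]] subspace_H i by simp
    then have "norm (D' i (G i (z k)) (s k - G i (z k))) \<le> M * norm (s k - G i (z k))"
      using M(2)[OF Gz_in[OF i]] R by blast
    moreover have "norm (D i (G i (z k))) \<le> M" using M(1)[OF Gz_in[OF i]] R by blast
    moreover have "D_model k i (s k) = D i (G i (z k)) + D' i (G i (z k)) (s k - G i (z k))"
      using True by (simp add: D_model_def D_lin_def)
    ultimately show ?thesis
      using norm_triangle_ineq[of "D i (G i (z k))" "D' i (G i (z k)) (s k - G i (z k))"]
      by (smt (verit))
  qed
  moreover have "Bseq (\<lambda>k. M + M * norm (s k - G i (z k)))"
    using s(2) Gz_Bseq[OF i] by (intro Bseq_plus Bseq_mult Bfun_const) (simp add: Bseq_norm_iff Bseq_diff)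
  ultimately show ?thesis by (rule Bseq_norm_le)
qed (simp add: D_model_def)

lemma prox_arg_Bseq:
  assumes i: "i \<in> {1..n}"
  shows "Bseq (\<lambda>k. prox_arg k i)"
  unfolding prox_arg_def
  using Gz_Bseq[OF i] w_Bseq[OF i] rho_Bseq[OF i] B_Bseq[OF i Gz_in[OF i]] C_Bseq[OF i Gz_in[OF i]]
  by (intro Bseq_diff Bseq_plus Bseq_scaleR_seq)

lemma x_Bseq:
  assumes i: "i \<in> {1..n}"
  shows "Bseq (\<lambda>k. x k i)"
proof -
  define g where "g = G i \<zeta>"
  obtain a\<^sub>0 where a\<^sub>0: "a\<^sub>0 \<in> A i g"
    using q_in_T[OF i] unfolding g_def by (blast elim: T_op_memD)
  have g_in: "g \<in> H i" unfolding g_def using G_maps[OF i \<zeta>_in] .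
  have bound: "norm (x k i) \<le> norm (G i (z k))
      + (norm (prox_arg k i - g) + \<rho> k i * (norm a\<^sub>0 + norm (D_model k i g)) + norm g)" for k
  proof (cases "w k i \<in> T_op (A i) (B i) (C i) (D i) (G i (z k))")
    case True
    then show ?thesis using step_i i rho_pos[OF i, of k] by simp
  next
    case False
    obtain a where a: "a \<in> A i (x k i)"
      and p: "prox_arg k i = \<rho> k i *\<^sub>R (a + D_model k i (x k i)) + x k i"
      using resolvent_step[OF i False] .
    have "norm (x k i - g) \<le> norm (prox_arg k i - g) + \<rho> k i * (norm a\<^sub>0 + norm (D_model k i g))"
      using p rho_pos[OF i, of k] A_monotone[OF i a a\<^sub>0] D_model_monotone[OF i x_in[OF i] g_in]
      by (intro resolvent_dist_le) auto
    then show ?thesis using norm_triangle_sub[of "x k i" g] norm_ge_zero[of "G i (z k)"] by linarith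
  qed
  have "Bseq (\<lambda>k. norm (G i (z k))
      + (norm (prox_arg k i - g) + \<rho> k i * (norm a\<^sub>0 + norm (D_model k i g)) + norm g))"
    using Gz_Bseq[OF i] prox_arg_Bseq[OF i] rho_Bseq[OF i] D_model_Bseq[OF i, of "\<lambda>_. g"] g_in
    by (intro Bseq_plus Bseq_mult Bfun_const) (simp_all add: Bseq_norm_iff Bseq_diff)
  then show ?thesis by (rule Bseq_norm_le[OF bound])
qed

lemma rho_lower_bound:
  assumes i: "i \<in> {1..n}"
  obtains r where "0 < r" "\<And>k. r \<le> \<rho> k i"
proof -
  obtain X where X: "\<forall>k. norm (x k i - G i (z k)) \<le> X"
    using BseqE[OF Bseq_diff[OF x_Bseq[OF i] Gz_Bseq[OF i]]] by blast
  define p where "p = 4 * (ell i)\<^sup>2 + (m i)\<^sup>2 * X\<^sup>2"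
  define b where "b = real_of_ereal (inverse (\<beta> i)) + \<delta>hat"
  have "0 \<le> p" unfolding p_def by simp
  have "0 < b" unfolding b_def using inverse_\<beta>_nonneg[OF i] par by linarith
  obtain r\<^sub>3 where "0 < r\<^sub>3"
    and r\<^sub>3: "\<And>k. i \<notin> ID \<Longrightarrow> w k i \<notin> T_op (A i) (B i) (C i) (D i) (G i (z k)) \<Longrightarrow> r\<^sub>3 \<le> \<rho> k i"
  proof (cases "i \<in> ID")
    case True
    then show ?thesis using that[of 1] by simp
  next
    case False
    then show ?thesis using that A8 i by (metis DiffI)
  qed
  define r where "r = min \<rho>hat (min (min 1 (\<theta>lo / (p + b))) r\<^sub>3)"
  have "0 < r" unfolding r_def using par \<open>0 \<le> p\<close> \<open>0 < b\<close> \<open>0 < r\<^sub>3\<close> by simp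
  moreover have "r \<le> \<rho> k i" for k
  proof (cases "w k i \<in> T_op (A i) (B i) (C i) (D i) (G i (z k))")
    case True
    then show ?thesis using step_i i unfolding r_def by simp
  next
    case nontrivial: False
    show ?thesis
    proof (cases "i \<in> ID")
      case True
      then show ?thesis
        using stepsize_ii_lower_bound[OF True nontrivial X[rule_format]] unfolding r_def p_def b_def
        by linarith
    next
      case False
      then show ?thesis using r\<^sub>3 nontrivial unfolding r_def by fastforce
    qed
  qed
  ultimately show ?thesis using that by blast
qed

lemma y_Bseq:
  assumes i: "i \<in> {1..n}"
  shows "Bseq (\<lambda>k. y k i)"
proof -
  obtain r where r: "0 < r" "\<And>k. r \<le> \<rho> k i" using rho_lower_bound[OF i] by blast
  have "norm (1 / \<rho> k i) \<le> 1 / r" for k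
    using r rho_pos[OF i, of k] by (simp add: frac_le)
  then have "Bseq (\<lambda>k. 1 / \<rho> k i)" by (rule BseqI')
  then show ?thesis
    unfolding y_eq[OF i]
    using Gz_Bseq[OF i] x_Bseq[OF i] w_Bseq[OF i] B_Bseq[OF i x_in[OF i] x_Bseq[OF i]]
      B_Bseq[OF i Gz_in[OF i] Gz_Bseq[OF i]] D_Bseq[OF i x_in[OF i] x_Bseq[OF i]]
      D_model_Bseq[OF i x_in[OF i] x_Bseq[OF i]]
    by (intro Bseq_plus Bseq_diff Bseq_scaleR_seq)
qed

end

end

theorem lemma4p3:
  fixes H :: "nat \<Rightarrow> 'a::{real_inner, complete_space} set"
    and n :: nat
    and G Gadj :: "nat \<Rightarrow> 'a \<Rightarrow> 'a"
    and A :: "nat \<Rightarrow> 'a \<Rightarrow> 'a set"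
    and B C D :: "nat \<Rightarrow> 'a \<Rightarrow> 'a"
    and D' :: "nat \<Rightarrow> 'a \<Rightarrow> 'a \<Rightarrow> 'a"
    and ell m :: "nat \<Rightarrow> real"
    and \<beta> :: "nat \<Rightarrow> ereal"
    and ID :: "nat set"
    and \<tau>lo \<tau>hi \<theta>lo \<theta>hi \<rho>hat \<delta>hat \<gamma> :: real
    and z :: "nat \<Rightarrow> 'a"
    and w x y u :: "nat \<Rightarrow> nat \<Rightarrow> 'a"
    and v :: "nat \<Rightarrow> 'a"
    and \<rho> :: "nat \<Rightarrow> nat \<Rightarrow> real"
    and \<tau> \<alpha> \<phi> \<pi> :: "nat \<Rightarrow> real"
  assumes n2: "n \<ge> 2"
    \<comment> \<open>Hilbert spaces H_0..H_{n-1} as closed subspaces of an ambient Hilbert space; H_n = H_0\<close>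
    and H_sub: "\<forall>i\<le>n. closed_subspace (H i)"
    and H_n: "H n = H 0"
    and A1: "\<forall>i\<in>{1..n}. bounded_linear_between (H 0) (H i) (G i)"
    and A1n: "\<forall>\<xi>\<in>H 0. G n \<xi> = \<xi>"
    and adj: "\<forall>i\<in>{1..n}. \<forall>\<eta>\<in>H i. Gadj i \<eta> \<in> H 0 \<and>
                 (\<forall>\<xi>\<in>H 0. inner (G i \<xi>) \<eta> = inner \<xi> (Gadj i \<eta>))"
    and A2: "\<forall>i\<in>{1..n}. maximal_monotone_op (H i) (A i)"
    and A3: "\<forall>i\<in>{1..n}. (\<forall>\<xi>\<in>H i. B i \<xi> \<in> H i) \<and> monotone_fun_on (H i) (B i) \<and> 0 \<le> ell i \<and>
               (\<forall>\<xi>\<in>H i. \<forall>\<eta>\<in>H i. norm (B i \<xi> - B i \<eta>) \<le> ell i * norm (\<xi> - \<eta>))"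
    \<comment> \<open>(A4), with ereal conventions: \<infinity> * 0 = 0\<close>
    and A4: "\<forall>i\<in>{1..n}. (\<forall>\<xi>\<in>H i. C i \<xi> \<in> H i) \<and> 0 < \<beta> i \<and>
               (\<forall>\<xi>\<in>H i. \<forall>\<eta>\<in>H i. \<beta> i * ereal ((norm (C i \<xi> - C i \<eta>))\<^sup>2)
                                      \<le> ereal (inner (\<xi> - \<eta>) (C i \<xi> - C i \<eta>)))"
    and A5: "\<forall>i\<in>{1..n}. (\<forall>\<xi>\<in>H i. D i \<xi> \<in> H i) \<and> monotone_fun_on (H i) (D i) \<and> 0 \<le> m i \<and>
               (\<forall>\<xi>\<in>H i. (D i has_derivative D' i \<xi>) (at \<xi> within H i) \<and>
                           (\<forall>h\<in>H i. D' i \<xi> h \<in> H i)) \<and>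
               (\<forall>\<xi>\<in>H i. \<forall>\<eta>\<in>H i. \<forall>h\<in>H i.
                   norm (D' i \<xi> h - D' i \<eta> h) \<le> m i * norm (\<xi> - \<eta>) * norm h)"
    and A6: "\<exists>\<zeta>\<in>H 0. \<exists>q :: nat \<Rightarrow> 'a. (\<forall>i\<in>{1..n}. q i \<in> T_op (A i) (B i) (C i) (D i) (G i \<zeta>)) \<and>
               (\<Sum>i=1..n. Gadj i (q i)) = 0"
    and A7: "ID \<subseteq> {1..n} \<and> (\<forall>i\<in>ID. 0 < m i) \<and>
               (\<forall>i\<in>{1..n} - ID. m i = 0 \<and> (\<forall>\<xi>\<in>H i. D i \<xi> = 0))"
    and par: "0 < \<tau>lo \<and> \<tau>lo < \<tau>hi \<and> \<tau>hi < 2 \<and> 0 < \<theta>lo \<and> \<theta>lo < \<theta>hi \<and> \<theta>hi < 2 \<and>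
              0 < \<rho>hat \<and> 0 < \<delta>hat \<and> 0 < \<gamma>"
    and init: "z 0 \<in> H 0 \<and> (\<forall>i\<in>{1..n-1}. w 0 i \<in> H i)"
    and wn: "\<forall>k. w k n = - (\<Sum>i=1..n-1. Gadj i (w k i))"
    and step_i: "\<forall>k. \<forall>i\<in>{1..n}. w k i \<in> T_op (A i) (B i) (C i) (D i) (G i (z k)) \<longrightarrow>
                   \<rho> k i = \<rho>hat \<and> x k i = G i (z k) \<and> y k i = w k i"
    and step_ii: "\<forall>k. \<forall>i\<in>ID. w k i \<notin> T_op (A i) (B i) (C i) (D i) (G i (z k)) \<longrightarrow>
                   0 < \<rho> k i \<and>
                   resolvent_rel (\<lambda>\<xi>. {\<rho> k i *\<^sub>R (a + D_lin (D i) (D' i) (G i (z k)) \<xi>) | a. a \<in> A i \<xi>})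
                     (G i (z k) + \<rho> k i *\<^sub>R w k i - \<rho> k i *\<^sub>R (B i (G i (z k)) + C i (G i (z k))))
                     (x k i) \<and>
                   \<theta>lo \<le> 4 * (ell i)\<^sup>2 * (\<rho> k i)\<^sup>2 + (real_of_ereal (inverse (\<beta> i)) + \<delta>hat) * \<rho> k i
                          + (m i * \<rho> k i * norm (x k i - G i (z k)))\<^sup>2 \<and>
                   4 * (ell i)\<^sup>2 * (\<rho> k i)\<^sup>2 + (real_of_ereal (inverse (\<beta> i)) + \<delta>hat) * \<rho> k i
                          + (m i * \<rho> k i * norm (x k i - G i (z k)))\<^sup>2 \<le> \<theta>hi \<and>
                   y k i = (1 / \<rho> k i) *\<^sub>R (G i (z k) - x k i) + w k i
                           + (B i (x k i) - B i (G i (z k)))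
                           + (D i (x k i) - D_lin (D i) (D' i) (G i (z k)) (x k i))"
    and step_iii: "\<forall>k. \<forall>i\<in>{1..n} - ID. w k i \<notin> T_op (A i) (B i) (C i) (D i) (G i (z k)) \<longrightarrow>
                   0 < \<rho> k i \<and>
                   resolvent_rel (\<lambda>\<xi>. {\<rho> k i *\<^sub>R a | a. a \<in> A i \<xi>})
                     (G i (z k) + \<rho> k i *\<^sub>R w k i - \<rho> k i *\<^sub>R (B i (G i (z k)) + C i (G i (z k))))
                     (x k i) \<and>
                   y k i = (1 / \<rho> k i) *\<^sub>R (G i (z k) - x k i) + w k i
                           + (B i (x k i) - B i (G i (z k)))"
    and u_def: "\<forall>k. \<forall>i\<in>{1..n-1}. u k i = x k i - G i (x k n)"
    and v_def: "\<forall>k. v k = (\<Sum>i=1..n. Gadj i (y k i))"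
    and phi_def: "\<forall>k. \<phi> k = inner (z k) (v k) + (\<Sum>i=1..n-1. inner (w k i) (u k i))
                     - (\<Sum>i=1..n. inner (x k i) (y k i)
                          + real_of_ereal (inverse (4 * \<beta> i)) * (norm (x k i - G i (z k)))\<^sup>2)"
    and pi_def: "\<forall>k. \<pi> k = (1 / \<gamma>) * (norm (v k))\<^sup>2 + (\<Sum>i=1..n-1. (norm (u k i))\<^sup>2)"
    and upd_pos: "\<forall>k. 0 < \<phi> k \<longrightarrow>
                   \<tau>lo \<le> \<tau> k \<and> \<tau> k \<le> \<tau>hi \<and> \<alpha> k = \<tau> k * \<phi> k / \<pi> k \<and>
                   z (Suc k) = z k - (\<alpha> k / \<gamma>) *\<^sub>R v k \<and>
                   (\<forall>i\<in>{1..n-1}. w (Suc k) i = w k i - \<alpha> k *\<^sub>R u k i)"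
    and upd_nonpos: "\<forall>k. \<not> 0 < \<phi> k \<longrightarrow>
                   z (Suc k) = z k \<and> (\<forall>i\<in>{1..n-1}. w (Suc k) i = w k i)"
    \<comment> \<open>(A8); upper bound 1/(1/(4 beta_i) + l_i) computed in ereal (1/0 = \<infinity>)\<close>
    and A8: "\<forall>i\<in>{1..n} - ID. \<exists>\<rho>lo \<rho>up. 0 < \<rho>lo \<and> \<rho>lo \<le> \<rho>up \<and>
               ereal \<rho>up < inverse (inverse (4 * \<beta> i) + ereal (ell i)) \<and>
               (\<forall>k. w k i \<notin> T_op (A i) (B i) (C i) (D i) (G i (z k)) \<longrightarrow>
                     \<rho>lo \<le> \<rho> k i \<and> \<rho> k i \<le> \<rho>up)"
  shows "(\<forall>i\<in>{1..n}. bounded (range (\<lambda>k. \<rho> k i)))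
       \<and> (\<forall>i\<in>{1..n}. bounded (range (\<lambda>k. x k i)))
       \<and> (\<exists>\<rho>min \<rho>max. 0 < \<rho>min \<and> \<rho>min \<le> \<rho>max \<and>
            (\<forall>i\<in>{1..n}. \<forall>k. \<rho>min \<le> \<rho> k i \<and> \<rho> k i \<le> \<rho>max))
       \<and> (\<forall>i\<in>{1..n}. bounded (range (\<lambda>k. y k i)))"
proof -
  interpret projective_splitting H n G Gadj A B C D D' ell m \<beta> ID \<tau>lo \<tau>hi \<theta>lo \<theta>hi \<rho>hat \<delta>hat \<gamma>
      z w x y u v \<rho> \<tau> \<alpha> \<phi> \<pi>
    by (rule projective_splitting.intro) (fact assms)+
  obtain \<zeta> q where sol: "\<zeta> \<in> H 0" "\<And>i. i \<in> {1..n} \<Longrightarrow> q i \<in> T_op (A i) (B i) (C i) (D i) (G i \<zeta>)"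
      "(\<Sum>i=1..n. Gadj i (q i)) = 0"
    using A6 by blast
  have "\<exists>l u. 0 < l \<and> (\<forall>k. l \<le> \<rho> k i \<and> \<rho> k i \<le> u)" if "i \<in> {1..n}" for i
    using rho_lower_bound[OF sol that] rho_upper_bound[OF that] by metis
  then have "\<exists>\<rho>min \<rho>max. 0 < \<rho>min \<and> \<rho>min \<le> \<rho>max \<and>
      (\<forall>i\<in>{1..n}. \<forall>k. \<rho>min \<le> \<rho> k i \<and> \<rho> k i \<le> \<rho>max)"
    using n2 by (intro uniform_bounds_over_finite) auto
  moreover have "Bseq (\<lambda>k. \<rho> k i)" "Bseq (\<lambda>k. x k i)" "Bseq (\<lambda>k. y k i)" if "i \<in> {1..n}" for i
    using rho_Bseq x_Bseq[OF sol] y_Bseq[OF sol] that by auto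
  ultimately show ?thesis by (simp add: Bseq_eq_bounded)
qed

end
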